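(* In the setting of the $i$-th horizontal composition (with $\psi$ dinatural in its $i$-th variable), if $\psi$ is also dinatural in its $j$-th variable for some $j\ne i$, then $\phi\ast_i\psi$ is dinatural in its variable $B_j$.
   Context: Notation: $k$ also denotes $\{1,\dots,k\}$; $\mathbb C^\alpha=\mathbb C^{\alpha_1}\times\cdots$ with $\mathbb C^+=\mathbb C$, $\mathbb C^-=\mathbb C^{op}$; for $\mathbf A=(A_1,\dots,A_n)$, $\sigma\colon k\to n$, $\mathbf A\sigma=(A_{\sigma1},\dots,A_{\sigma k})$; a morphism in a contravariant argument is read in $\mathbb C^{op}$. A transformation $\phi\colon F\to G$ ($F\colon\mathbb C^\alpha\to\mathbb C$, $G\colon\mathbb C^\beta\to\mathbb C$) of type $|\alpha|\xrightarrow{\sigma}n\xleftarrow{\tau}|\beta|$ is a family $\phi_{\mathbf A}\colon F(\mathbf A\sigma)\to G(\mathbf A\tau)$, $\mathbf A\in\mathrm{Ob}(\mathbb C)^n$. $\mathbf A[X,Y/i]\sigma$ is the tuple whose $j$-th entry is $X$ if $\sigma j=i,\alpha_j=-$, $Y$ if $\sigma j=i,\alpha_j=+$, $A_{\sigma j}$ (or $1_{A_{\sigma j}}$ for morphisms) otherwise; $\mathbf A[X/i]=\mathbf A[X,X/i]$. $\phi$ is dinatural in its $i$-th variable if for all $A_j$ ($j\ne i$) and $f\colon A\to B$: $G(\mathbf A[A,f/i]\tau)\circ\phi_{\mathbf A[A/i]}\circ F(\mathbf A[f,A/i]\sigma)=G(\mathbf A[f,B/i]\tau)\circ\phi_{\mathbf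 A[B/i]}\circ F(\mathbf A[B,f/i]\sigma)$. Horizontal composition: let $F\colon\mathbb C^\alpha\to\mathbb C$, $G\colon\mathbb C^\beta\to\mathbb C$, $H\colon\mathbb C^\gamma\to\mathbb C$, $K\colon\mathbb C^\delta\to\mathbb C$, $\phi\colon F\to G$ of type $|\alpha|\xrightarrow{\sigma}n\xleftarrow{\tau}|\beta|$ with variables $\mathbf A=(A_1,\dots,A_n)$, and $\psi\colon H\to K$ of type $|\gamma|\xrightarrow{\eta}m\xleftarrow{\theta}|\delta|$ with variables $\mathbf B=(B_1,\dots,B_m)$, dinatural in its $i$-th variable. The $i$-th horizontal composite $\phi\ast_i\psi$ is the transformation with variables $\mathbf B[\mathbf A/i]=(B_1,\dots,B_{i-1},A_1,\dots,A_n,B_{i+1},\dots,B_m)$ (so $A_k$ is its $(i-1+k)$-th variable). Its domain functor is obtained from $H$ by substituting, into each argument position $u$ with $\eta u=i$, the functor $F$ if $\gamma_u=+$ and $G^{op}$ if $\gamma_u=-$ (other positions unchanged); its codomain functor is obtained from $K$ by substituting, into each position $v$ with $\theta v=i$, $G$ if $\delta_v=+$ and $F^{op}$ if $\delta_v=-$. In its type, an argument coming from the $j$-th argument of a copy of $F$ is assigned variable $A_{\sigma j}$, one coming from the $j$-th argument of a copy of $G$ variable $A_{\tau j}$, and an unchanged position $u$ of $H$ (resp. $v$ of $K$) variable $B_{\eta u}$ (resp. $B_{\theta v}$). Its component at $\mathbf B[\mathbf A/i]$ is the morphism $H(\mathbf B[G(\mathbf A\tau),F(\mathbf A\sigma)/i]\eta)\to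 K(\mathbf B[F(\mathbf A\sigma),G(\mathbf A\tau)/i]\theta)$ given by $K(\mathbf B[F(\mathbf A\sigma),\phi_{\mathbf A}/i]\theta)\circ\psi_{\mathbf B[F(\mathbf A\sigma)/i]}\circ H(\mathbf B[\phi_{\mathbf A},F(\mathbf A\sigma)/i]\eta)$, equal to $K(\mathbf B[\phi_{\mathbf A},G(\mathbf A\tau)/i]\theta)\circ\psi_{\mathbf B[G(\mathbf A\tau)/i]}\circ H(\mathbf B[G(\mathbf A\tau),\phi_{\mathbf A}/i]\eta)$ by dinaturality of $\psi$. Dinaturality of $\phi\ast_i\psi$ in a variable is in the sense above applied to this transformation. *)

theory Defs
  imports Main
begin

text \<open>Indices are 0-based: the paper's variable k corresponds to index k-1.
  A variance list has True for covariant (+) and False for contravariant (-).\<close>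

record ('o,'m) cat =
  Obj :: "'o set"
  Arr :: "'m set"
  Dom :: "'m \<Rightarrow> 'o"
  Cod :: "'m \<Rightarrow> 'o"
  Idm :: "'o \<Rightarrow> 'm"
  Cmp :: "'m \<Rightarrow> 'm \<Rightarrow> 'm"  \<comment> \<open>Cmp C g f = g after f\<close>

definition category :: "('o,'m) cat \<Rightarrow> bool" where
  "category C \<longleftrightarrow>
    (\<forall>a\<in>Obj C. Idm C a \<in> Arr C \<and> Dom C (Idm C a) = a \<and> Cod C (Idm C a) = a) \<and>
    (\<forall>f\<in>Arr C. Dom C f \<in> Obj C \<and> Cod C f \<in> Obj C) \<and>
    (\<forall>f\<in>Arr C. \<forall>g\<in>Arr C. Cod C f = Dom C g \<longrightarrow>
        Cmp C g f \<in> Arr C \<and> Dom C (Cmp C g f) = Dom C f \<and> Cod C (Cmp C g f) = Cod C g) \<and>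
    (\<forall>f\<in>Arr C. Cmp C f (Idm C (Dom C f)) = f \<and> Cmp C (Idm C (Cod C f)) f = f) \<and>
    (\<forall>f\<in>Arr C. \<forall>g\<in>Arr C. \<forall>h\<in>Arr C. Cod C f = Dom C g \<and> Cod C g = Dom C h \<longrightarrow>
        Cmp C h (Cmp C g f) = Cmp C (Cmp C h g) f)"

text \<open>A functor C^alpha -> C, acting on lists of objects / morphisms.\<close>
record ('o,'m) mfunctor =
  fob :: "'o list \<Rightarrow> 'o"
  fmor :: "'m list \<Rightarrow> 'm"

definition vdom :: "('o,'m) cat \<Rightarrow> bool list \<Rightarrow> 'm list \<Rightarrow> 'o list" where
  "vdom C \<alpha> fs = map (\<lambda>k. if \<alpha>!k then Dom C (fs!k) else Cod C (fs!k)) [0..<length \<alpha>]"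

definition vcod :: "('o,'m) cat \<Rightarrow> bool list \<Rightarrow> 'm list \<Rightarrow> 'o list" where
  "vcod C \<alpha> fs = map (\<lambda>k. if \<alpha>!k then Cod C (fs!k) else Dom C (fs!k)) [0..<length \<alpha>]"

text \<open>Composition gs after fs in C^alpha (contravariant components composed in C^op).\<close>
definition vcomp :: "('o,'m) cat \<Rightarrow> bool list \<Rightarrow> 'm list \<Rightarrow> 'm list \<Rightarrow> 'm list" where
  "vcomp C \<alpha> gs fs = map (\<lambda>k. if \<alpha>!k then Cmp C (gs!k) (fs!k) else Cmp C (fs!k) (gs!k)) [0..<length \<alpha>]"

definition is_functor :: "('o,'m) cat \<Rightarrow> bool list \<Rightarrow> ('o,'m) mfunctor \<Rightarrow> bool" where
  "is_functor C \<alpha> F \<longleftrightarrow>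
    (\<forall>As. length As = length \<alpha> \<and> set As \<subseteq> Obj C \<longrightarrow>
        fob F As \<in> Obj C \<and> fmor F (map (Idm C) As) = Idm C (fob F As)) \<and>
    (\<forall>fs. length fs = length \<alpha> \<and> set fs \<subseteq> Arr C \<longrightarrow>
        fmor F fs \<in> Arr C \<and> Dom C (fmor F fs) = fob F (vdom C \<alpha> fs)
        \<and> Cod C (fmor F fs) = fob F (vcod C \<alpha> fs)) \<and>
    (\<forall>fs gs. length fs = length \<alpha> \<and> length gs = length \<alpha> \<and> set fs \<subseteq> Arr C \<and> set gs \<subseteq> Arr C
        \<and> vcod C \<alpha> fs = vdom C \<alpha> gs \<longrightarrow>
        fmor F (vcomp C \<alpha> gs fs) = Cmp C (fmor F gs) (fmor F fs))"

definition tup :: "'a list \<Rightarrow> (nat \<Rightarrow> nat) \<Rightarrow> nat \<Rightarrow> 'a list" where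
  "tup A \<sigma> k = map (\<lambda>j. A ! (\<sigma> j)) [0..<k]"

definition is_transformation ::
  "('o,'m) cat \<Rightarrow> bool list \<Rightarrow> bool list \<Rightarrow> (nat \<Rightarrow> nat) \<Rightarrow> (nat \<Rightarrow> nat) \<Rightarrow> nat
   \<Rightarrow> ('o,'m) mfunctor \<Rightarrow> ('o,'m) mfunctor \<Rightarrow> ('o list \<Rightarrow> 'm) \<Rightarrow> bool" where
  "is_transformation C \<alpha> \<beta> \<sigma> \<tau> n F G \<phi> \<longleftrightarrow>
    (\<forall>j<length \<alpha>. \<sigma> j < n) \<and> (\<forall>j<length \<beta>. \<tau> j < n) \<and>
    (\<forall>A. length A = n \<and> set A \<subseteq> Obj C \<longrightarrow>
        \<phi> A \<in> Arr C \<and> Dom C (\<phi> A) = fob F (tup A \<sigma> (length \<alpha>))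
        \<and> Cod C (\<phi> A) = fob G (tup A \<tau> (length \<beta>)))"

text \<open>A[X,Y/i]sigma: X in contravariant slots mapped to i, Y in covariant ones, a(sigma j) elsewhere.\<close>
definition subst :: "bool list \<Rightarrow> (nat \<Rightarrow> nat) \<Rightarrow> (nat \<Rightarrow> 'a) \<Rightarrow> nat \<Rightarrow> 'a \<Rightarrow> 'a \<Rightarrow> 'a list" where
  "subst \<alpha> \<sigma> a i X Y = map (\<lambda>j. if \<sigma> j = i then (if \<alpha>!j then Y else X) else a (\<sigma> j)) [0..<length \<alpha>]"

definition dinatural ::
  "('o,'m) cat \<Rightarrow> bool list \<Rightarrow> bool list \<Rightarrow> (nat \<Rightarrow> nat) \<Rightarrow> (nat \<Rightarrow> nat) \<Rightarrow> nat
   \<Rightarrow> ('o,'m) mfunctor \<Rightarrow> ('o,'m) mfunctor \<Rightarrow> ('o list \<Rightarrow> 'm) \<Rightarrow> nat \<Rightarrow> bool" where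
  "dinatural C \<alpha> \<beta> \<sigma> \<tau> n F G \<phi> i \<longleftrightarrow>
    (\<forall>A f. length A = n \<and> set A \<subseteq> Obj C \<and> f \<in> Arr C \<longrightarrow>
      (let a = Dom C f; b = Cod C f; e = (\<lambda>k. Idm C (A!k)) in
        Cmp C (fmor G (subst \<beta> \<tau> e i (Idm C a) f))
          (Cmp C (\<phi> (A[i := a])) (fmor F (subst \<alpha> \<sigma> e i f (Idm C a))))
        = Cmp C (fmor G (subst \<beta> \<tau> e i f (Idm C b)))
          (Cmp C (\<phi> (A[i := b])) (fmor F (subst \<alpha> \<sigma> e i (Idm C b) f)))))"

text \<open>New index of the outer variable B_l (l \<noteq> i) in B[A/i], with n inner variables.\<close>
definition reix :: "nat \<Rightarrow> nat \<Rightarrow> nat \<Rightarrow> nat" where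
  "reix i n l = (if l < i then l else l - 1 + n)"

text \<open>Substituting functor P (variances aP) into covariant slots u with eta u = i of
  an outer functor with variances gamma, and Q^op (variances aQ) into the contravariant ones.\<close>
definition seglen :: "bool list \<Rightarrow> (nat \<Rightarrow> nat) \<Rightarrow> nat \<Rightarrow> bool list \<Rightarrow> bool list \<Rightarrow> nat \<Rightarrow> nat" where
  "seglen \<gamma> \<eta> i aP aQ u = (if \<eta> u = i then (if \<gamma>!u then length aP else length aQ) else 1)"

definition segoff :: "bool list \<Rightarrow> (nat \<Rightarrow> nat) \<Rightarrow> nat \<Rightarrow> bool list \<Rightarrow> bool list \<Rightarrow> nat \<Rightarrow> nat" where
  "segoff \<gamma> \<eta> i aP aQ u = sum_list (map (seglen \<gamma> \<eta> i aP aQ) [0..<u])"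

definition seg :: "bool list \<Rightarrow> (nat \<Rightarrow> nat) \<Rightarrow> nat \<Rightarrow> bool list \<Rightarrow> bool list \<Rightarrow> 'a list \<Rightarrow> nat \<Rightarrow> 'a list" where
  "seg \<gamma> \<eta> i aP aQ xs u = take (seglen \<gamma> \<eta> i aP aQ u) (drop (segoff \<gamma> \<eta> i aP aQ u) xs)"

definition sub_var :: "bool list \<Rightarrow> (nat \<Rightarrow> nat) \<Rightarrow> nat \<Rightarrow> bool list \<Rightarrow> bool list \<Rightarrow> bool list" where
  "sub_var \<gamma> \<eta> i aP aQ = concat (map (\<lambda>u. if \<eta> u = i then (if \<gamma>!u then aP else map Not aQ)
      else [\<gamma>!u]) [0..<length \<gamma>])"

definition sub_type :: "bool list \<Rightarrow> (nat \<Rightarrow> nat) \<Rightarrow> nat \<Rightarrow> nat \<Rightarrow> bool list \<Rightarrow> (nat \<Rightarrow> nat)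
    \<Rightarrow> bool list \<Rightarrow> (nat \<Rightarrow> nat) \<Rightarrow> nat list" where
  "sub_type \<gamma> \<eta> i n aP sP aQ sQ = concat (map (\<lambda>u. if \<eta> u = i then
        (if \<gamma>!u then map (\<lambda>j. i + sP j) [0..<length aP] else map (\<lambda>j. i + sQ j) [0..<length aQ])
      else [reix i n (\<eta> u)]) [0..<length \<gamma>])"

definition sub_functor :: "bool list \<Rightarrow> (nat \<Rightarrow> nat) \<Rightarrow> nat \<Rightarrow> bool list \<Rightarrow> bool list
    \<Rightarrow> ('o,'m) mfunctor \<Rightarrow> ('o,'m) mfunctor \<Rightarrow> ('o,'m) mfunctor \<Rightarrow> ('o,'m) mfunctor" where
  "sub_functor \<gamma> \<eta> i aP aQ H P Q =
    \<lparr> fob = (\<lambda>xs. fob H (map (\<lambda>u. let s = seg \<gamma> \<eta> i aP aQ xs u in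
          if \<eta> u = i then (if \<gamma>!u then fob P s else fob Q s) else hd s) [0..<length \<gamma>])),
      fmor = (\<lambda>xs. fmor H (map (\<lambda>u. let s = seg \<gamma> \<eta> i aP aQ xs u in
          if \<eta> u = i then (if \<gamma>!u then fmor P s else fmor Q s) else hd s) [0..<length \<gamma>])) \<rparr>"

text \<open>Components of phi *_i psi at V = B[A/i] (V has length m - 1 + n).\<close>
definition hcomp :: "('o,'m) cat \<Rightarrow> bool list \<Rightarrow> (nat \<Rightarrow> nat) \<Rightarrow> ('o,'m) mfunctor \<Rightarrow> ('o list \<Rightarrow> 'm) \<Rightarrow> nat
    \<Rightarrow> bool list \<Rightarrow> (nat \<Rightarrow> nat) \<Rightarrow> ('o,'m) mfunctor \<Rightarrow> bool list \<Rightarrow> (nat \<Rightarrow> nat) \<Rightarrow> ('o,'m) mfunctor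
    \<Rightarrow> ('o list \<Rightarrow> 'm) \<Rightarrow> nat \<Rightarrow> nat \<Rightarrow> 'o list \<Rightarrow> 'm" where
  "hcomp C \<alpha> \<sigma> F \<phi> n \<gamma> \<eta> H \<delta> \<theta> K \<psi> m i V =
    (let A = take n (drop i V);
         FA = fob F (tup A \<sigma> (length \<alpha>));
         B = map (\<lambda>l. if l = i then FA else if l < i then V!l else V!(l - 1 + n)) [0..<m];
         e = (\<lambda>l. Idm C (B!l))
     in Cmp C (fmor K (subst \<delta> \<theta> e i (Idm C FA) (\<phi> A)))
          (Cmp C (\<psi> B) (fmor H (subst \<gamma> \<eta> e i (\<phi> A) (Idm C FA)))))"

end

theory Submission
  imports Defs
begin

text \<open>Fix all variables of \<open>\<phi> \<ast>\<^sub>i \<psi>\<close> except \<open>B\<^sub>j\<close>. The component is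
  \<open>K(F A, \<phi>\<^sub>A) \<circ> \<psi>\<^sub>B \<circ> H(\<phi>\<^sub>A, F A)\<close> with \<open>B\<^sub>i = F A\<close>, and \<open>B\<^sub>j\<close> enters only through \<open>\<psi>\<close> and
  the \<open>j\<close>-slots of \<open>H\<close> and \<open>K\<close>. As \<open>H\<close> and \<open>K\<close> are functorial in all slots simultaneously,
  their actions on the \<open>i\<close>-slots commute with those on the \<open>j\<close>-slots. Hence each side of the
  dinaturality hexagon of \<open>\<phi> \<ast>\<^sub>i \<psi>\<close> in \<open>B\<^sub>j\<close> is \<open>K(F A, \<phi>\<^sub>A) \<circ> \<Xi> \<circ> H(\<phi>\<^sub>A, F A)\<close>, with the
  same outer factors on both sides and \<open>\<Xi>\<close> the corresponding side of the hexagon of \<open>\<psi>\<close> in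
  \<open>B\<^sub>j\<close>, whose two sides agree.\<close>

lemma sum_list_map_upt_add_le:
  assumes "u < L"
  shows "sum_list (map len [0..<u]) + (len u :: nat) \<le> sum_list (map len [0..<L])"
  using assms
proof (induction L)
  case (Suc L)
  then show ?case by (cases "u = L") auto
qed simp

lemma length_concat_map_upt:
  assumes "\<forall>u<L. length (g u) = len u"
  shows "length (concat (map g [0..<L])) = sum_list (map len [0..<L])"
  using assms by (induction L) auto

lemma nth_concat_map_upt:
  assumes "\<forall>u<L. length (g u) = len u" and "u < L" and "k < len u"
  shows "concat (map g [0..<L]) ! (sum_list (map len [0..<u]) + k) = g u ! k"
  using assms
proof (induction L)
  case (Suc L)
  have length_prefix: "length (concat (map g [0..<L])) = sum_list (map len [0..<L])"
    using Suc.prems(1) by (intro length_concat_map_upt) auto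
  show ?case
  proof (cases "u = L")
    case True
    then show ?thesis using length_prefix by (simp add: nth_append)
  next
    case False
    with Suc.prems have "u < L" by simp
    then have "sum_list (map len [0..<u]) + k < sum_list (map len [0..<L])"
      using sum_list_map_upt_add_le[of u L len] Suc.prems(3) by simp
    then show ?thesis using Suc \<open>u < L\<close> length_prefix by (simp add: nth_append)
  qed
qed simp

lemma seg_conv_nth:
  assumes "length xs = sum_list (map (seglen \<gamma> \<eta> i aP aQ) [0..<length \<gamma>])" and "u < length \<gamma>"
  shows "seg \<gamma> \<eta> i aP aQ xs u
    = map (\<lambda>k. xs ! (segoff \<gamma> \<eta> i aP aQ u + k)) [0..<seglen \<gamma> \<eta> i aP aQ u]"
proof -
  have "segoff \<gamma> \<eta> i aP aQ u + seglen \<gamma> \<eta> i aP aQ u \<le> length xs"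
    using sum_list_map_upt_add_le[OF assms(2)] assms(1) unfolding segoff_def by simp
  then show ?thesis unfolding seg_def by (intro nth_equalityI) auto
qed

lemma reix_eq_iff: "l \<noteq> i \<Longrightarrow> j \<noteq> i \<Longrightarrow> reix i n l = reix i n j \<longleftrightarrow> l = j"
  unfolding reix_def by auto

lemma reix_neq_inner: "k < n \<Longrightarrow> j \<noteq> i \<Longrightarrow> i + k \<noteq> reix i n j"
  unfolding reix_def by auto

lemma reix_less: "l < m \<Longrightarrow> l \<noteq> i \<Longrightarrow> i < m \<Longrightarrow> reix i n l < m - 1 + n"
  unfolding reix_def by auto

lemma category_Idm:
  "category C \<Longrightarrow> a \<in> Obj C \<Longrightarrow> Idm C a \<in> Arr C \<and> Dom C (Idm C a) = a \<and> Cod C (Idm C a) = a"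
  unfolding category_def by blast

lemma category_Dom_Cod: "category C \<Longrightarrow> f \<in> Arr C \<Longrightarrow> Dom C f \<in> Obj C \<and> Cod C f \<in> Obj C"
  unfolding category_def by blast

lemma category_Cmp:
  "category C \<Longrightarrow> f \<in> Arr C \<Longrightarrow> g \<in> Arr C \<Longrightarrow> Cod C f = Dom C g \<Longrightarrow>
    Cmp C g f \<in> Arr C \<and> Dom C (Cmp C g f) = Dom C f \<and> Cod C (Cmp C g f) = Cod C g"
  unfolding category_def by blast

lemma category_Cmp_Idm_left: "category C \<Longrightarrow> f \<in> Arr C \<Longrightarrow> Cmp C (Idm C (Cod C f)) f = f"
  unfolding category_def by blast

lemma category_Cmp_Idm_right: "category C \<Longrightarrow> f \<in> Arr C \<Longrightarrow> Cmp C f (Idm C (Dom C f)) = f"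
  unfolding category_def by blast

lemma category_Cmp_assoc:
  "category C \<Longrightarrow> f \<in> Arr C \<Longrightarrow> g \<in> Arr C \<Longrightarrow> h \<in> Arr C \<Longrightarrow>
    Cod C f = Dom C g \<Longrightarrow> Cod C g = Dom C h \<Longrightarrow> Cmp C h (Cmp C g f) = Cmp C (Cmp C h g) f"
  unfolding category_def by blast

lemma category_Cmp_Idm_Idm: "category C \<Longrightarrow> a \<in> Obj C \<Longrightarrow> Cmp C (Idm C a) (Idm C a) = Idm C a"
  using category_Idm category_Cmp_Idm_left by metis

lemma category_Cmp_regroup:
  assumes "category C"
    and arr: "k' \<in> Arr C" "ki \<in> Arr C" "ps \<in> Arr C" "hi \<in> Arr C" "h' \<in> Arr C"
      "k0 \<in> Arr C" "k1 \<in> Arr C" "h1 \<in> Arr C" "h0 \<in> Arr C"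
    and cod: "Cod C h' = Dom C hi" "Cod C hi = Dom C ps" "Cod C ps = Dom C ki" "Cod C ki = Dom C k'"
      "Cod C h0 = Dom C h1" "Cod C h1 = Dom C ps" "Cod C k1 = Dom C k0" "Dom C k1 = Cod C ps"
    and h_eq: "Cmp C hi h' = Cmp C h1 h0" and k_eq: "Cmp C k' ki = Cmp C k0 k1"
  shows "Cmp C k' (Cmp C (Cmp C ki (Cmp C ps hi)) h') = Cmp C k0 (Cmp C (Cmp C k1 (Cmp C ps h1)) h0)"
proof -
  note assoc = category_Cmp_assoc[OF assms(1)] and comp = category_Cmp[OF assms(1)]
  have ps_hi: "Cmp C ps hi \<in> Arr C" "Dom C (Cmp C ps hi) = Dom C hi" "Cod C (Cmp C ps hi) = Cod C ps"
    using comp[OF arr(4,3) cod(2)] by auto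
  have ps_h1: "Cmp C ps h1 \<in> Arr C" "Dom C (Cmp C ps h1) = Dom C h1" "Cod C (Cmp C ps h1) = Cod C ps"
    using comp[OF arr(8,3) cod(6)] by auto
  have ps_h1_h0: "Cmp C (Cmp C ps h1) h0 \<in> Arr C" "Cod C (Cmp C (Cmp C ps h1) h0) = Cod C ps"
    using comp[OF arr(9) ps_h1(1)] ps_h1 cod by auto
  have "Cmp C (Cmp C ki (Cmp C ps hi)) h' = Cmp C ki (Cmp C (Cmp C ps hi) h')"
    using assoc[OF arr(5) ps_hi(1) arr(2)] ps_hi cod by simp
  also have "\<dots> = Cmp C ki (Cmp C ps (Cmp C hi h'))"
    using assoc[OF arr(5,4,3)] cod by simp
  also have "\<dots> = Cmp C ki (Cmp C (Cmp C ps h1) h0)"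
    using assoc[OF arr(9,8,3)] cod h_eq by simp
  finally have "Cmp C k' (Cmp C (Cmp C ki (Cmp C ps hi)) h')
      = Cmp C (Cmp C k0 k1) (Cmp C (Cmp C ps h1) h0)"
    using assoc[OF ps_h1_h0(1) arr(2,1)] ps_h1_h0 cod k_eq by simp
  also have "\<dots> = Cmp C k0 (Cmp C (Cmp C k1 (Cmp C ps h1)) h0)"
    using assoc[OF ps_h1_h0(1) arr(7,6)] assoc[OF arr(9) ps_h1(1) arr(7)] ps_h1_h0 ps_h1 cod by simp
  finally show ?thesis .
qed

lemma is_functor_tabulate:
  assumes "is_functor C \<gamma> H" and "\<forall>u<length \<gamma>. f u \<in> Arr C"
  shows "fmor H (map f [0..<length \<gamma>]) \<in> Arr C"
    and "Dom C (fmor H (map f [0..<length \<gamma>]))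
      = fob H (map (\<lambda>u. if \<gamma>!u then Dom C (f u) else Cod C (f u)) [0..<length \<gamma>])"
    and "Cod C (fmor H (map f [0..<length \<gamma>]))
      = fob H (map (\<lambda>u. if \<gamma>!u then Cod C (f u) else Dom C (f u)) [0..<length \<gamma>])"
proof -
  have "length (map f [0..<length \<gamma>]) = length \<gamma> \<and> set (map f [0..<length \<gamma>]) \<subseteq> Arr C"
    using assms(2) by auto
  moreover have
    "vdom C \<gamma> (map f [0..<length \<gamma>]) = map (\<lambda>u. if \<gamma>!u then Dom C (f u) else Cod C (f u)) [0..<length \<gamma>]"
    "vcod C \<gamma> (map f [0..<length \<gamma>]) = map (\<lambda>u. if \<gamma>!u then Cod C (f u) else Dom C (f u)) [0..<length \<gamma>]"
    unfolding vdom_def vcod_def by auto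
  ultimately show "fmor H (map f [0..<length \<gamma>]) \<in> Arr C"
    "Dom C (fmor H (map f [0..<length \<gamma>]))
      = fob H (map (\<lambda>u. if \<gamma>!u then Dom C (f u) else Cod C (f u)) [0..<length \<gamma>])"
    "Cod C (fmor H (map f [0..<length \<gamma>]))
      = fob H (map (\<lambda>u. if \<gamma>!u then Cod C (f u) else Dom C (f u)) [0..<length \<gamma>])"
    using assms(1) unfolding is_functor_def by (simp_all only:)
qed

lemma is_functor_tabulate_Cmp:
  assumes "is_functor C \<gamma> H"
    and "\<forall>u<length \<gamma>. f u \<in> Arr C \<and> g u \<in> Arr C \<and>
      (if \<gamma>!u then Cod C (f u) = Dom C (g u) else Cod C (g u) = Dom C (f u))"
  shows "Cmp C (fmor H (map g [0..<length \<gamma>])) (fmor H (map f [0..<length \<gamma>]))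
    = fmor H (map (\<lambda>u. if \<gamma>!u then Cmp C (g u) (f u) else Cmp C (f u) (g u)) [0..<length \<gamma>])"
proof -
  have functorial: "\<forall>fs gs. length fs = length \<gamma> \<and> length gs = length \<gamma> \<and> set fs \<subseteq> Arr C
      \<and> set gs \<subseteq> Arr C \<and> vcod C \<gamma> fs = vdom C \<gamma> gs \<longrightarrow>
      fmor H (vcomp C \<gamma> gs fs) = Cmp C (fmor H gs) (fmor H fs)"
    using assms(1) unfolding is_functor_def by (elim conjE)
  have "vcod C \<gamma> (map f [0..<length \<gamma>]) = vdom C \<gamma> (map g [0..<length \<gamma>])"
    unfolding vdom_def vcod_def using assms(2) by auto
  moreover have "set (map f [0..<length \<gamma>]) \<subseteq> Arr C" "set (map g [0..<length \<gamma>]) \<subseteq> Arr C"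
    using assms(2) by auto
  ultimately have "fmor H (vcomp C \<gamma> (map g [0..<length \<gamma>]) (map f [0..<length \<gamma>]))
      = Cmp C (fmor H (map g [0..<length \<gamma>])) (fmor H (map f [0..<length \<gamma>]))"
    by (intro functorial[rule_format]) auto
  moreover have "vcomp C \<gamma> (map g [0..<length \<gamma>]) (map f [0..<length \<gamma>])
      = map (\<lambda>u. if \<gamma>!u then Cmp C (g u) (f u) else Cmp C (f u) (g u)) [0..<length \<gamma>]"
    unfolding vcomp_def by auto
  ultimately show ?thesis by simp
qed

text \<open>Entry \<open>u\<close> of the tuple \<open>a[X,Y/i][X',Y'/j]\<eta>\<close>, for \<open>i \<noteq> j\<close>.\<close>
definition subst2 :: "bool list \<Rightarrow> (nat \<Rightarrow> nat) \<Rightarrow> nat \<Rightarrow> nat \<Rightarrow> (nat \<Rightarrow> 'a)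
    \<Rightarrow> 'a \<Rightarrow> 'a \<Rightarrow> 'a \<Rightarrow> 'a \<Rightarrow> nat \<Rightarrow> 'a" where
  "subst2 \<gamma> \<eta> i j a X Y X' Y' u = (if \<eta> u = i then (if \<gamma>!u then Y else X)
     else if \<eta> u = j then (if \<gamma>!u then Y' else X') else a (\<eta> u))"

lemma subst_eq_subst2:
  assumes "\<forall>u<length \<gamma>. \<eta> u \<noteq> i \<longrightarrow> \<eta> u \<noteq> j \<longrightarrow> E (\<eta> u) = a (\<eta> u)" and "E j = Z" and "j \<noteq> i"
  shows "subst \<gamma> \<eta> E i X Y = map (subst2 \<gamma> \<eta> i j a X Y Z Z) [0..<length \<gamma>]"
  using assms unfolding subst_def subst2_def by auto

lemma subst_eq_subst2':
  assumes "\<forall>u<length \<gamma>. \<eta> u \<noteq> i \<longrightarrow> \<eta> u \<noteq> j \<longrightarrow> E (\<eta> u) = a (\<eta> u)" and "E i = Z" and "j \<noteq> i"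
  shows "subst \<gamma> \<eta> E j X Y = map (subst2 \<gamma> \<eta> i j a Z Z X Y) [0..<length \<gamma>]"
  using assms unfolding subst_def subst2_def by auto

lemma is_functor_subst2:
  assumes "is_functor C \<gamma> H" and "i \<noteq> j"
    and "\<forall>u<length \<gamma>. \<eta> u \<noteq> i \<longrightarrow> \<eta> u \<noteq> j \<longrightarrow>
      e (\<eta> u) \<in> Arr C \<and> Dom C (e (\<eta> u)) = a (\<eta> u) \<and> Cod C (e (\<eta> u)) = a (\<eta> u)"
    and "X \<in> Arr C" "Y \<in> Arr C" "X' \<in> Arr C" "Y' \<in> Arr C"
  shows "fmor H (map (subst2 \<gamma> \<eta> i j e X Y X' Y') [0..<length \<gamma>]) \<in> Arr C"
    and "Dom C (fmor H (map (subst2 \<gamma> \<eta> i j e X Y X' Y') [0..<length \<gamma>])) =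
      fob H (map (subst2 \<gamma> \<eta> i j a (Cod C X) (Dom C Y) (Cod C X') (Dom C Y')) [0..<length \<gamma>])"
    and "Cod C (fmor H (map (subst2 \<gamma> \<eta> i j e X Y X' Y') [0..<length \<gamma>])) =
      fob H (map (subst2 \<gamma> \<eta> i j a (Dom C X) (Cod C Y) (Dom C X') (Cod C Y')) [0..<length \<gamma>])"
proof -
  have arr: "\<forall>u<length \<gamma>. subst2 \<gamma> \<eta> i j e X Y X' Y' u \<in> Arr C"
    using assms unfolding subst2_def by auto
  have dom_eq: "map (\<lambda>u. if \<gamma>!u then Dom C (subst2 \<gamma> \<eta> i j e X Y X' Y' u)
        else Cod C (subst2 \<gamma> \<eta> i j e X Y X' Y' u)) [0..<length \<gamma>]
      = map (subst2 \<gamma> \<eta> i j a (Cod C X) (Dom C Y) (Cod C X') (Dom C Y')) [0..<length \<gamma>]"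
    and cod_eq: "map (\<lambda>u. if \<gamma>!u then Cod C (subst2 \<gamma> \<eta> i j e X Y X' Y' u)
        else Dom C (subst2 \<gamma> \<eta> i j e X Y X' Y' u)) [0..<length \<gamma>]
      = map (subst2 \<gamma> \<eta> i j a (Dom C X) (Cod C Y) (Dom C X') (Cod C Y')) [0..<length \<gamma>]"
    using assms(2,3) by (auto simp: subst2_def)
  then show "fmor H (map (subst2 \<gamma> \<eta> i j e X Y X' Y') [0..<length \<gamma>]) \<in> Arr C"
    "Dom C (fmor H (map (subst2 \<gamma> \<eta> i j e X Y X' Y') [0..<length \<gamma>])) =
      fob H (map (subst2 \<gamma> \<eta> i j a (Cod C X) (Dom C Y) (Cod C X') (Dom C Y')) [0..<length \<gamma>])"
    "Cod C (fmor H (map (subst2 \<gamma> \<eta> i j e X Y X' Y') [0..<length \<gamma>])) =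
      fob H (map (subst2 \<gamma> \<eta> i j a (Dom C X) (Cod C Y) (Dom C X') (Cod C Y')) [0..<length \<gamma>])"
    using is_functor_tabulate[OF assms(1) arr] unfolding dom_eq cod_eq by simp_all
qed

lemma is_functor_subst2_Cmp:
  assumes "is_functor C \<gamma> H" and "i \<noteq> j"
    and "\<forall>u<length \<gamma>. \<eta> u \<noteq> i \<longrightarrow> \<eta> u \<noteq> j \<longrightarrow> e (\<eta> u) \<in> Arr C
      \<and> Dom C (e (\<eta> u)) = Cod C (e (\<eta> u)) \<and> Cmp C (e (\<eta> u)) (e (\<eta> u)) = e (\<eta> u)"
    and "fX \<in> Arr C" "fY \<in> Arr C" "fX' \<in> Arr C" "fY' \<in> Arr C"
    and "gX \<in> Arr C" "gY \<in> Arr C" "gX' \<in> Arr C" "gY' \<in> Arr C"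
    and "Cod C fY = Dom C gY" "Cod C gX = Dom C fX" "Cod C fY' = Dom C gY'" "Cod C gX' = Dom C fX'"
  shows "Cmp C (fmor H (map (subst2 \<gamma> \<eta> i j e gX gY gX' gY') [0..<length \<gamma>]))
      (fmor H (map (subst2 \<gamma> \<eta> i j e fX fY fX' fY') [0..<length \<gamma>]))
    = fmor H (map (subst2 \<gamma> \<eta> i j e (Cmp C fX gX) (Cmp C gY fY) (Cmp C fX' gX') (Cmp C gY' fY'))
        [0..<length \<gamma>])"
proof -
  have "\<forall>u<length \<gamma>. subst2 \<gamma> \<eta> i j e fX fY fX' fY' u \<in> Arr C \<and> subst2 \<gamma> \<eta> i j e gX gY gX' gY' u \<in> Arr C \<and>
     (if \<gamma>!u then Cod C (subst2 \<gamma> \<eta> i j e fX fY fX' fY' u) = Dom C (subst2 \<gamma> \<eta> i j e gX gY gX' gY' u)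
      else Cod C (subst2 \<gamma> \<eta> i j e gX gY gX' gY' u) = Dom C (subst2 \<gamma> \<eta> i j e fX fY fX' fY' u))"
    using assms unfolding subst2_def by auto
  moreover have Cmp_eq: "map (\<lambda>u. if \<gamma>!u
        then Cmp C (subst2 \<gamma> \<eta> i j e gX gY gX' gY' u) (subst2 \<gamma> \<eta> i j e fX fY fX' fY' u)
        else Cmp C (subst2 \<gamma> \<eta> i j e fX fY fX' fY' u) (subst2 \<gamma> \<eta> i j e gX gY gX' gY' u)) [0..<length \<gamma>]
     = map (subst2 \<gamma> \<eta> i j e (Cmp C fX gX) (Cmp C gY fY) (Cmp C fX' gX') (Cmp C gY' fY')) [0..<length \<gamma>]"
    using assms(2,3) by (auto simp: subst2_def)
  ultimately show ?thesis using is_functor_tabulate_Cmp[OF assms(1)] by (simp only: Cmp_eq)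
qed

text \<open>Substituting into the \<open>j\<close>-th outer variable of \<open>B[A/i]\<close> only touches the unsubstituted
  slots of \<open>H\<close>; the substituted slots receive identities, which \<open>P\<close> and \<open>Q\<close> preserve.\<close>
lemma fmor_sub_functor_subst:
  assumes FP: "is_functor C aP P" and FQ: "is_functor C aQ Q"
    and sP: "\<forall>k<length aP. sP k < n" and sQ: "\<forall>k<length aQ. sQ k < n"
    and "i < m" "j \<noteq> i"
    and lV: "length V = m - 1 + n" and oV: "set V \<subseteq> Obj C"
  shows "fmor (sub_functor \<gamma> \<eta> i aP aQ H P Q)
      (subst (sub_var \<gamma> \<eta> i aP aQ) ((!) (sub_type \<gamma> \<eta> i n aP sP aQ sQ)) (\<lambda>k. Idm C (V!k)) (reix i n j) X Y)
    = fmor H (map (subst2 \<gamma> \<eta> i j (\<lambda>l. Idm C (V ! reix i n l))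
        (Idm C (fob Q (tup (take n (drop i V)) sQ (length aQ))))
        (Idm C (fob P (tup (take n (drop i V)) sP (length aP)))) X Y) [0..<length \<gamma>])"
proof -
  define len where "len = seglen \<gamma> \<eta> i aP aQ"
  define gv where "gv = (\<lambda>u. if \<eta> u = i then (if \<gamma>!u then aP else map Not aQ) else [\<gamma>!u])"
  define gt where "gt = (\<lambda>u. if \<eta> u = i then
        (if \<gamma>!u then map (\<lambda>j. i + sP j) [0..<length aP] else map (\<lambda>j. i + sQ j) [0..<length aQ])
      else [reix i n (\<eta> u)])"
  define sv where "sv = sub_var \<gamma> \<eta> i aP aQ"
  define ty where "ty = sub_type \<gamma> \<eta> i n aP sP aQ sQ"
  define xs where "xs = subst sv ((!) ty) (\<lambda>k. Idm C (V!k)) (reix i n j) X Y"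
  define A where "A = take n (drop i V)"
  have sv_concat: "sv = concat (map gv [0..<length \<gamma>])" unfolding sv_def sub_var_def gv_def by simp
  have ty_concat: "ty = concat (map gt [0..<length \<gamma>])" unfolding ty_def sub_type_def gt_def by simp
  have length_gv: "\<forall>u<length \<gamma>. length (gv u) = len u" unfolding gv_def len_def seglen_def by auto
  have length_gt: "\<forall>u<length \<gamma>. length (gt u) = len u" unfolding gt_def len_def seglen_def by auto
  have length_sv: "length sv = sum_list (map len [0..<length \<gamma>])"
    unfolding sv_concat by (rule length_concat_map_upt[OF length_gv])
  have length_xs: "length xs = sum_list (map len [0..<length \<gamma>])"
    unfolding xs_def subst_def using length_sv by simp
  have segoff_eq: "segoff \<gamma> \<eta> i aP aQ u = sum_list (map len [0..<u])" for u
    unfolding segoff_def len_def ..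
  have nth_xs: "xs ! (segoff \<gamma> \<eta> i aP aQ u + k) =
      (if gt u ! k = reix i n j then (if gv u ! k then Y else X) else Idm C (V ! (gt u ! k)))"
    if "u < length \<gamma>" "k < len u" for u k
  proof -
    have "segoff \<gamma> \<eta> i aP aQ u + k < length sv"
      using sum_list_map_upt_add_le[OF that(1), of len] that(2) length_sv segoff_eq by simp
    moreover have "sv ! (segoff \<gamma> \<eta> i aP aQ u + k) = gv u ! k"
      unfolding sv_concat segoff_eq by (rule nth_concat_map_upt[OF length_gv that])
    moreover have "ty ! (segoff \<gamma> \<eta> i aP aQ u + k) = gt u ! k"
      unfolding ty_concat segoff_eq by (rule nth_concat_map_upt[OF length_gt that])
    ultimately show ?thesis unfolding xs_def subst_def by simp
  qed
  have iV: "i + n \<le> length V" using lV \<open>i < m\<close> by simp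
  have nth_A: "A ! k = V ! (i + k)" if "k < n" for k
    unfolding A_def using that iV by simp
  have tup_objects: "set (tup A s (length a)) \<subseteq> Obj C" "length (tup A s (length a)) = length a"
    if "\<forall>k<length a. s k < n" for s and a :: "bool list"
    using that iV by (force simp: tup_def A_def intro!: subsetD[OF oV] nth_mem)+
  have seg_Idm: "seg \<gamma> \<eta> i aP aQ xs u = map (Idm C) (tup A s (length a))"
    if "u < length \<gamma>" "\<eta> u = i" "len u = length a" "\<forall>k<length a. s k < n"
      "\<forall>k<length a. gt u ! k = i + s k" for u s and a :: "bool list"
  proof -
    have "seg \<gamma> \<eta> i aP aQ xs u = map (\<lambda>k. xs ! (segoff \<gamma> \<eta> i aP aQ u + k)) [0..<len u]"
      unfolding len_def by (rule seg_conv_nth[OF length_xs[unfolded len_def] that(1)])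
    then show ?thesis
      using that reix_neq_inner[OF _ \<open>j \<noteq> i\<close>] by (auto simp: tup_def nth_xs nth_A)
  qed
  show ?thesis
    unfolding sub_functor_def xs_def[symmetric, unfolded sv_def ty_def] mfunctor.simps A_def[symmetric]
  proof (intro arg_cong[where f="fmor H"] map_cong refl)
    fix u assume "u \<in> set [0..<length \<gamma>]"
    then have u: "u < length \<gamma>" by simp
    show "(let s = seg \<gamma> \<eta> i aP aQ xs u in
        if \<eta> u = i then if \<gamma> ! u then fmor P s else fmor Q s else hd s) =
      subst2 \<gamma> \<eta> i j (\<lambda>l. Idm C (V ! reix i n l)) (Idm C (fob Q (tup A sQ (length aQ))))
        (Idm C (fob P (tup A sP (length aP)))) X Y u"
    proof (cases "\<eta> u = i")
      case True
      show ?thesis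
      proof (cases "\<gamma>!u")
        case True
        then have "seg \<gamma> \<eta> i aP aQ xs u = map (Idm C) (tup A sP (length aP))"
          using \<open>\<eta> u = i\<close> sP by (intro seg_Idm u) (auto simp: len_def seglen_def gt_def)
        then show ?thesis using FP tup_objects[OF sP] \<open>\<eta> u = i\<close> True
          unfolding is_functor_def subst2_def Let_def by auto
      next
        case False
        then have "seg \<gamma> \<eta> i aP aQ xs u = map (Idm C) (tup A sQ (length aQ))"
          using \<open>\<eta> u = i\<close> sQ by (intro seg_Idm u) (auto simp: len_def seglen_def gt_def)
        then show ?thesis using FQ tup_objects[OF sQ] \<open>\<eta> u = i\<close> False
          unfolding is_functor_def subst2_def Let_def by auto
      qed
    next
      case False
      then have "len u = 1" unfolding len_def seglen_def by simp
      then have "hd (seg \<gamma> \<eta> i aP aQ xs u) = xs ! (segoff \<gamma> \<eta> i aP aQ u + 0)"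
        using seg_conv_nth[OF length_xs[unfolded len_def] u] unfolding len_def by simp
      also have "\<dots> = (if reix i n (\<eta> u) = reix i n j then (if \<gamma>!u then Y else X)
          else Idm C (V ! reix i n (\<eta> u)))"
        using nth_xs[OF u, of 0] \<open>len u = 1\<close> False unfolding gt_def gv_def by simp
      finally show ?thesis
        using False reix_eq_iff[OF False \<open>j \<noteq> i\<close>] unfolding subst2_def Let_def by auto
    qed
  qed
qed

locale hcomp_component =
  fixes C :: "('o,'m) cat" and \<alpha> \<beta> \<gamma> \<delta> :: "bool list" and \<sigma> \<tau> \<eta> \<theta> :: "nat \<Rightarrow> nat"
    and n m i j :: nat and F G H K :: "('o,'m) mfunctor" and \<phi> \<psi> :: "'o list \<Rightarrow> 'm"
    and V :: "'o list"
  assumes category: "category C"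
    and F: "is_functor C \<alpha> F" and G: "is_functor C \<beta> G"
    and H: "is_functor C \<gamma> H" and K: "is_functor C \<delta> K"
    and \<phi>: "is_transformation C \<alpha> \<beta> \<sigma> \<tau> n F G \<phi>"
    and \<psi>: "is_transformation C \<gamma> \<delta> \<eta> \<theta> m H K \<psi>"
    and i_less: "i < m" and j_less: "j < m" and j_neq: "j \<noteq> i"
    and length_V: "length V = m - 1 + n" and V_objects: "set V \<subseteq> Obj C"
begin

definition "inner_vars = take n (drop i V)"
definition "F_inner = fob F (tup inner_vars \<sigma> (length \<alpha>))"
definition "G_inner = fob G (tup inner_vars \<tau> (length \<beta>))"
definition "outer_var l = V ! reix i n l"
definition "outer_vars c = map (\<lambda>l. if l = i then F_inner else if l = j then c else outer_var l) [0..<m]"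

definition "slot_fmor \<gamma>' \<eta>' H' X Y X' Y'
  = fmor H' (map (subst2 \<gamma>' \<eta>' i j (\<lambda>l. Idm C (outer_var l)) X Y X' Y') [0..<length \<gamma>'])"

lemma inner_vars: "length inner_vars = n" "set inner_vars \<subseteq> Obj C"
  using length_V i_less V_objects unfolding inner_vars_def
  by (auto dest: in_set_takeD in_set_dropD)

lemma \<eta>_less: "\<forall>u<length \<gamma>. \<eta> u < m" and \<theta>_less: "\<forall>u<length \<delta>. \<theta> u < m"
  using \<psi> unfolding is_transformation_def by auto

lemma \<phi>_inner_vars:
  "\<phi> inner_vars \<in> Arr C" "Dom C (\<phi> inner_vars) = F_inner" "Cod C (\<phi> inner_vars) = G_inner"
  using \<phi> inner_vars unfolding is_transformation_def F_inner_def G_inner_def by auto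

lemma F_inner_G_inner_objects: "F_inner \<in> Obj C" "G_inner \<in> Obj C"
  using category_Dom_Cod[OF category \<phi>_inner_vars(1)] \<phi>_inner_vars by auto

lemma outer_var_object: "l < m \<Longrightarrow> l \<noteq> i \<Longrightarrow> outer_var l \<in> Obj C"
  using reix_less[OF _ _ i_less] length_V V_objects unfolding outer_var_def by auto

lemma length_outer_vars: "length (outer_vars c) = m"
  unfolding outer_vars_def by simp

lemma nth_outer_vars:
  "l < m \<Longrightarrow> outer_vars c ! l = (if l = i then F_inner else if l = j then c else outer_var l)"
  unfolding outer_vars_def by simp

lemma outer_vars_objects: "c \<in> Obj C \<Longrightarrow> set (outer_vars c) \<subseteq> Obj C"
  unfolding outer_vars_def using F_inner_G_inner_objects outer_var_object by auto

lemma tup_outer_vars: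
  assumes "\<forall>u<length \<gamma>'. \<eta>' u < m"
  shows "tup (outer_vars c) \<eta>' (length \<gamma>') = map (subst2 \<gamma>' \<eta>' i j outer_var F_inner F_inner c c) [0..<length \<gamma>']"
  unfolding tup_def subst2_def using assms nth_outer_vars by auto

lemma \<psi>_outer_vars:
  assumes "c \<in> Obj C"
  shows "\<psi> (outer_vars c) \<in> Arr C"
    and "Dom C (\<psi> (outer_vars c)) = fob H (map (subst2 \<gamma> \<eta> i j outer_var F_inner F_inner c c) [0..<length \<gamma>])"
    and "Cod C (\<psi> (outer_vars c)) = fob K (map (subst2 \<delta> \<theta> i j outer_var F_inner F_inner c c) [0..<length \<delta>])"
  using \<psi> length_outer_vars outer_vars_objects[OF assms] tup_outer_vars
  unfolding is_transformation_def by auto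

context
  fixes \<gamma>' \<eta>' H'
  assumes H': "is_functor C \<gamma>' H'" and \<eta>': "\<forall>u<length \<gamma>'. \<eta>' u < m"
begin

lemma outer_Idm:
  "\<forall>u<length \<gamma>'. \<eta>' u \<noteq> i \<longrightarrow> \<eta>' u \<noteq> j \<longrightarrow> Idm C (outer_var (\<eta>' u)) \<in> Arr C
    \<and> Dom C (Idm C (outer_var (\<eta>' u))) = outer_var (\<eta>' u) \<and> Cod C (Idm C (outer_var (\<eta>' u))) = outer_var (\<eta>' u)
    \<and> Cmp C (Idm C (outer_var (\<eta>' u))) (Idm C (outer_var (\<eta>' u))) = Idm C (outer_var (\<eta>' u))"
  using \<eta>' outer_var_object category_Idm[OF category] category_Cmp_Idm_Idm[OF category] by auto

lemma slot_fmor: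
  assumes "X \<in> Arr C" "Y \<in> Arr C" "X' \<in> Arr C" "Y' \<in> Arr C"
  shows "slot_fmor \<gamma>' \<eta>' H' X Y X' Y' \<in> Arr C"
    and "Dom C (slot_fmor \<gamma>' \<eta>' H' X Y X' Y') =
      fob H' (map (subst2 \<gamma>' \<eta>' i j outer_var (Cod C X) (Dom C Y) (Cod C X') (Dom C Y')) [0..<length \<gamma>'])"
    and "Cod C (slot_fmor \<gamma>' \<eta>' H' X Y X' Y') =
      fob H' (map (subst2 \<gamma>' \<eta>' i j outer_var (Dom C X) (Cod C Y) (Dom C X') (Cod C Y')) [0..<length \<gamma>'])"
  using is_functor_subst2[OF H' not_sym[OF j_neq], where e="\<lambda>l. Idm C (outer_var l)" and a=outer_var]
    outer_Idm assms
  unfolding slot_fmor_def by auto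

lemma slot_fmor_Cmp:
  assumes "fX \<in> Arr C" "fY \<in> Arr C" "fX' \<in> Arr C" "fY' \<in> Arr C"
    and "gX \<in> Arr C" "gY \<in> Arr C" "gX' \<in> Arr C" "gY' \<in> Arr C"
    and "Cod C fY = Dom C gY" "Cod C gX = Dom C fX" "Cod C fY' = Dom C gY'" "Cod C gX' = Dom C fX'"
  shows "Cmp C (slot_fmor \<gamma>' \<eta>' H' gX gY gX' gY') (slot_fmor \<gamma>' \<eta>' H' fX fY fX' fY')
    = slot_fmor \<gamma>' \<eta>' H' (Cmp C fX gX) (Cmp C gY fY) (Cmp C fX' gX') (Cmp C gY' fY')"
  using is_functor_subst2_Cmp[OF H' not_sym[OF j_neq], where e="\<lambda>l. Idm C (outer_var l)"]
    outer_Idm assms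
  unfolding slot_fmor_def by auto

end

lemma fmor_sub_functor_H:
  "fmor (sub_functor \<gamma> \<eta> i \<alpha> \<beta> H F G)
      (subst (sub_var \<gamma> \<eta> i \<alpha> \<beta>) ((!) (sub_type \<gamma> \<eta> i n \<alpha> \<sigma> \<beta> \<tau>)) (\<lambda>k. Idm C (V!k)) (reix i n j) X Y)
    = slot_fmor \<gamma> \<eta> H (Idm C G_inner) (Idm C F_inner) X Y"
  using fmor_sub_functor_subst[OF F G _ _ i_less j_neq length_V V_objects] \<phi>
  unfolding slot_fmor_def outer_var_def F_inner_def G_inner_def inner_vars_def is_transformation_def
  by blast

lemma fmor_sub_functor_K:
  "fmor (sub_functor \<delta> \<theta> i \<beta> \<alpha> K G F)
      (subst (sub_var \<delta> \<theta> i \<beta> \<alpha>) ((!) (sub_type \<delta> \<theta> i n \<beta> \<tau> \<alpha> \<sigma>)) (\<lambda>k. Idm C (V!k)) (reix i n j) X Y)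
    = slot_fmor \<delta> \<theta> K (Idm C F_inner) (Idm C G_inner) X Y"
  using fmor_sub_functor_subst[OF G F _ _ i_less j_neq length_V V_objects] \<phi>
  unfolding slot_fmor_def outer_var_def F_inner_def G_inner_def inner_vars_def is_transformation_def
  by blast

lemma hcomp_update_outer:
  assumes "c \<in> Obj C"
  shows "hcomp C \<alpha> \<sigma> F \<phi> n \<gamma> \<eta> H \<delta> \<theta> K \<psi> m i (V[reix i n j := c])
    = Cmp C (slot_fmor \<delta> \<theta> K (Idm C F_inner) (\<phi> inner_vars) (Idm C c) (Idm C c))
        (Cmp C (\<psi> (outer_vars c)) (slot_fmor \<gamma> \<eta> H (\<phi> inner_vars) (Idm C F_inner) (Idm C c) (Idm C c)))"
proof -
  have inner: "take n (drop i (V[reix i n j := c])) = inner_vars"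
    by (rule nth_equalityI)
      (use length_V i_less reix_neq_inner[OF _ j_neq, of _ n] in \<open>auto simp: inner_vars_def intro!: nth_list_update_neq[OF not_sym]\<close>)
  have outer: "map (\<lambda>l. if l = i then F_inner else if l < i then V[reix i n j := c] ! l
      else V[reix i n j := c] ! (l - 1 + n)) [0..<m] = outer_vars c"
  proof -
    have "V[reix i n j := c] ! reix i n l = (if l = j then c else outer_var l)" if "l < m" "l \<noteq> i" for l
      using reix_less[OF that i_less, of n] length_V reix_eq_iff[OF that(2) j_neq, of n]
      unfolding outer_var_def by auto
    moreover have "(if l < i then W ! l else W ! (l - 1 + n)) = W ! reix i n l" for l and W :: "'o list"
      unfolding reix_def by simp
    ultimately show ?thesis unfolding outer_vars_def by (intro map_cong) auto
  qed
  have "subst \<delta> \<theta> (\<lambda>l. Idm C (outer_vars c ! l)) i (Idm C F_inner) (\<phi> inner_vars)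
      = map (subst2 \<delta> \<theta> i j (\<lambda>l. Idm C (outer_var l)) (Idm C F_inner) (\<phi> inner_vars) (Idm C c) (Idm C c))
          [0..<length \<delta>]"
    "subst \<gamma> \<eta> (\<lambda>l. Idm C (outer_vars c ! l)) i (\<phi> inner_vars) (Idm C F_inner)
      = map (subst2 \<gamma> \<eta> i j (\<lambda>l. Idm C (outer_var l)) (\<phi> inner_vars) (Idm C F_inner) (Idm C c) (Idm C c))
          [0..<length \<gamma>]"
    by (rule subst_eq_subst2; use \<eta>_less \<theta>_less nth_outer_vars j_less j_neq in simp)+
  then show ?thesis
    unfolding hcomp_def Let_def inner F_inner_def[symmetric] outer slot_fmor_def by simp
qed

lemma \<psi>_dinatural_outer:
  assumes "dinatural C \<gamma> \<delta> \<eta> \<theta> m H K \<psi> j" and "f \<in> Arr C"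
  shows "Cmp C (slot_fmor \<delta> \<theta> K (Idm C F_inner) (Idm C F_inner) (Idm C (Dom C f)) f)
      (Cmp C (\<psi> (outer_vars (Dom C f)))
        (slot_fmor \<gamma> \<eta> H (Idm C F_inner) (Idm C F_inner) f (Idm C (Dom C f))))
    = Cmp C (slot_fmor \<delta> \<theta> K (Idm C F_inner) (Idm C F_inner) f (Idm C (Cod C f)))
      (Cmp C (\<psi> (outer_vars (Cod C f)))
        (slot_fmor \<gamma> \<eta> H (Idm C F_inner) (Idm C F_inner) (Idm C (Cod C f)) f))"
proof -
  have update: "(outer_vars c)[j := c'] = outer_vars c'" for c c'
    by (rule nth_equalityI) (use j_less j_neq in \<open>auto simp: length_outer_vars nth_outer_vars nth_list_update\<close>)
  have "subst \<gamma> \<eta> (\<lambda>l. Idm C (outer_vars c ! l)) j X Y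
      = map (subst2 \<gamma> \<eta> i j (\<lambda>l. Idm C (outer_var l)) (Idm C F_inner) (Idm C F_inner) X Y) [0..<length \<gamma>]"
    "subst \<delta> \<theta> (\<lambda>l. Idm C (outer_vars c ! l)) j X Y
      = map (subst2 \<delta> \<theta> i j (\<lambda>l. Idm C (outer_var l)) (Idm C F_inner) (Idm C F_inner) X Y) [0..<length \<delta>]"
    for c X Y
    by (rule subst_eq_subst2'; use \<eta>_less \<theta>_less nth_outer_vars i_less j_neq in simp)+
  moreover have "length (outer_vars (Dom C f)) = m \<and> set (outer_vars (Dom C f)) \<subseteq> Obj C \<and> f \<in> Arr C"
    using length_outer_vars outer_vars_objects category_Dom_Cod[OF category] assms(2) by blast
  note dinatural = assms(1)[unfolded dinatural_def Let_def, rule_format, OF this]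
  ultimately show ?thesis using dinatural unfolding update slot_fmor_def by simp
qed

lemma hcomp_dinatural_outer:
  assumes "dinatural C \<gamma> \<delta> \<eta> \<theta> m H K \<psi> j" and f: "f \<in> Arr C"
  shows "Cmp C (fmor (sub_functor \<delta> \<theta> i \<beta> \<alpha> K G F) (subst (sub_var \<delta> \<theta> i \<beta> \<alpha>)
        ((!) (sub_type \<delta> \<theta> i n \<beta> \<tau> \<alpha> \<sigma>)) (\<lambda>k. Idm C (V ! k)) (reix i n j) (Idm C (Dom C f)) f))
      (Cmp C (hcomp C \<alpha> \<sigma> F \<phi> n \<gamma> \<eta> H \<delta> \<theta> K \<psi> m i (V[reix i n j := Dom C f]))
        (fmor (sub_functor \<gamma> \<eta> i \<alpha> \<beta> H F G) (subst (sub_var \<gamma> \<eta> i \<alpha> \<beta>)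
          ((!) (sub_type \<gamma> \<eta> i n \<alpha> \<sigma> \<beta> \<tau>)) (\<lambda>k. Idm C (V ! k)) (reix i n j) f (Idm C (Dom C f)))))
    = Cmp C (fmor (sub_functor \<delta> \<theta> i \<beta> \<alpha> K G F) (subst (sub_var \<delta> \<theta> i \<beta> \<alpha>)
        ((!) (sub_type \<delta> \<theta> i n \<beta> \<tau> \<alpha> \<sigma>)) (\<lambda>k. Idm C (V ! k)) (reix i n j) f (Idm C (Cod C f))))
      (Cmp C (hcomp C \<alpha> \<sigma> F \<phi> n \<gamma> \<eta> H \<delta> \<theta> K \<psi> m i (V[reix i n j := Cod C f]))
        (fmor (sub_functor \<gamma> \<eta> i \<alpha> \<beta> H F G) (subst (sub_var \<gamma> \<eta> i \<alpha> \<beta>)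
          ((!) (sub_type \<gamma> \<eta> i n \<alpha> \<sigma> \<beta> \<tau>)) (\<lambda>k. Idm C (V ! k)) (reix i n j) (Idm C (Cod C f)) f)))"
proof -
  define a b p where "a = Dom C f" and "b = Cod C f" and "p = \<phi> inner_vars"
  define hm km where "hm = slot_fmor \<gamma> \<eta> H" and "km = slot_fmor \<delta> \<theta> K"
  have ab: "a \<in> Obj C" "b \<in> Obj C" "Dom C f = a" "Cod C f = b"
    using category_Dom_Cod[OF category f] unfolding a_def b_def by auto
  have p: "p \<in> Arr C" "Dom C p = F_inner" "Cod C p = G_inner"
    using \<phi>_inner_vars unfolding p_def by auto
  have units: "Cmp C (Idm C G_inner) p = p" "Cmp C p (Idm C F_inner) = p" "Cmp C f (Idm C a) = f"
      "Cmp C (Idm C b) f = f"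
    using category_Cmp_Idm_left[OF category p(1)] category_Cmp_Idm_right[OF category p(1)]
      category_Cmp_Idm_left[OF category f] category_Cmp_Idm_right[OF category f] p ab by simp_all
  note typing = f p ab units F_inner_G_inner_objects category_Idm[OF category]
    category_Cmp_Idm_Idm[OF category] \<psi>_outer_vars[OF ab(1)] \<psi>_outer_vars[OF ab(2)]
    slot_fmor[OF H \<eta>_less, folded hm_def] slot_fmor[OF K \<theta>_less, folded km_def]
    slot_fmor_Cmp[OF H \<eta>_less, folded hm_def] slot_fmor_Cmp[OF K \<theta>_less, folded km_def]
  have left: "Cmp C (km (Idm C F_inner) (Idm C G_inner) (Idm C a) f)
      (Cmp C (Cmp C (km (Idm C F_inner) p (Idm C a) (Idm C a))
        (Cmp C (\<psi> (outer_vars a)) (hm p (Idm C F_inner) (Idm C a) (Idm C a))))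
        (hm (Idm C G_inner) (Idm C F_inner) f (Idm C a)))
    = Cmp C (km (Idm C F_inner) p (Idm C a) (Idm C b))
      (Cmp C (Cmp C (km (Idm C F_inner) (Idm C F_inner) (Idm C a) f)
        (Cmp C (\<psi> (outer_vars a)) (hm (Idm C F_inner) (Idm C F_inner) f (Idm C a))))
        (hm p (Idm C F_inner) (Idm C b) (Idm C a)))"
    by (rule category_Cmp_regroup[OF category]) (simp_all add: typing)
  have right: "Cmp C (km (Idm C F_inner) (Idm C G_inner) f (Idm C b))
      (Cmp C (Cmp C (km (Idm C F_inner) p (Idm C b) (Idm C b))
        (Cmp C (\<psi> (outer_vars b)) (hm p (Idm C F_inner) (Idm C b) (Idm C b))))
        (hm (Idm C G_inner) (Idm C F_inner) (Idm C b) f))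
    = Cmp C (km (Idm C F_inner) p (Idm C a) (Idm C b))
      (Cmp C (Cmp C (km (Idm C F_inner) (Idm C F_inner) f (Idm C b))
        (Cmp C (\<psi> (outer_vars b)) (hm (Idm C F_inner) (Idm C F_inner) (Idm C b) f)))
        (hm p (Idm C F_inner) (Idm C b) (Idm C a)))"
    by (rule category_Cmp_regroup[OF category]) (simp_all add: typing)
  show ?thesis
    using \<psi>_dinatural_outer[OF assms, folded a_def b_def hm_def km_def]
    unfolding a_def[symmetric] b_def[symmetric] fmor_sub_functor_H fmor_sub_functor_K
      hcomp_update_outer[OF ab(1)] hcomp_update_outer[OF ab(2)]
    unfolding p_def[symmetric] hm_def[symmetric] km_def[symmetric] left right
    by simp
qed

end

theorem mainTheorem9:
  fixes C :: "('o,'m) cat"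
  assumes "category C"
    and "is_functor C \<alpha> F" and "is_functor C \<beta> G" and "is_functor C \<gamma> H" and "is_functor C \<delta> K"
    and "is_transformation C \<alpha> \<beta> \<sigma> \<tau> n F G \<phi>"
    and "is_transformation C \<gamma> \<delta> \<eta> \<theta> m H K \<psi>"
    and "i < m" and "j < m" and "j \<noteq> i"
    and "dinatural C \<gamma> \<delta> \<eta> \<theta> m H K \<psi> i"
    and "dinatural C \<gamma> \<delta> \<eta> \<theta> m H K \<psi> j"
  shows "dinatural C (sub_var \<gamma> \<eta> i \<alpha> \<beta>) (sub_var \<delta> \<theta> i \<beta> \<alpha>)
           ((!) (sub_type \<gamma> \<eta> i n \<alpha> \<sigma> \<beta> \<tau>)) ((!) (sub_type \<delta> \<theta> i n \<beta> \<tau> \<alpha> \<sigma>))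
           (m - 1 + n) (sub_functor \<gamma> \<eta> i \<alpha> \<beta> H F G) (sub_functor \<delta> \<theta> i \<beta> \<alpha> K G F)
           (hcomp C \<alpha> \<sigma> F \<phi> n \<gamma> \<eta> H \<delta> \<theta> K \<psi> m i) (reix i n j)"
  unfolding dinatural_def Let_def
proof (intro allI impI, goal_cases)
  case (1 V f)
  interpret hcomp_component C \<alpha> \<beta> \<gamma> \<delta> \<sigma> \<tau> \<eta> \<theta> n m i j F G H K \<phi> \<psi> V
    using assms 1 by unfold_locales auto
  show ?case using hcomp_dinatural_outer[OF assms(12)] 1 by blast
qed
end
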